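(* In the FAVANO process described in the context, for every time step $t\ge 0$, $$\mathbb{E}[\Phi_{t+1}]\le(1-\kappa)\,\mathbb{E}[\Phi_t]+3\frac{s^2}{n}\eta^2\sum_{i=1}^n\mathbb{E}\big\|\check h^i_{t+1}\big\|^2,\qquad \kappa=\frac{1}{n}\cdot\frac{s(n-s)}{2(n+1)(s+1)} .$$
   Context: FAVANO process. Fix integers $n\ge1$, $1\le s\le n$, $K\ge1$, $d\ge1$, a step size $\eta>0$ and differentiable $f_1,\dots,f_n:\mathbb{R}^d\to\mathbb{R}$, $f=\frac1n\sum_i f_i$. All random variables live on one probability space. For each client $i$ a stochastic gradient oracle returns, at a query point $x$, $\widetilde g^i(x)=\nabla f_i(x)+\xi$ where, conditionally on everything generated before the query (including $x$), $\xi$ has mean zero (each query uses fresh noise). Initialize $w_0\in\mathbb{R}^d$ deterministic and $w_0^i=w_0$ for all $i$. For each $t\ge1$, each client $i$ and each $q\ge1$ define recursively $\widetilde h^i_{t,q}=\widetilde g^i\big(w^i_{t-1}-\eta\sum_{r=1}^{q-1}\widetilde h^i_{t,r}\big)$ and $h^i_{t,q}=\nabla f_i\big(w^i_{t-1}-\eta\sum_{r=1}^{q-1}\widetilde h^i_{t,r}\big)$. At each $t\ge1$ there are random integers $E^1_t,\dots,E^n_t\ge0$ with $\mathbf{P}(E^i_t>0)>0$, and a random subset $\mathcal{S}_t\subseteq\{1,\dots,n\}$ uniformly distributed among subsets of size $s$; the family $(\mathcal S_t,E^1_t,\dots,E^n_t)$ is independent of all the other randomness (the past up to time $t-1$ and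 all $\widetilde h^i_{t,q}$), and $\mathcal S_t$ is independent of $(E^i_t)_i$. The weight $\alpha^i_t$ is either $\mathbf{P}(E^i_t>0)\,(E^i_t\wedge K)$ (stochastic version) or $\mathbb{E}[E^i_t\wedge K]$ (deterministic version), where $a\wedge b=\min(a,b)$. Set $\check h^i_t=\frac{1}{\alpha^i_t}\sum_{q=1}^{E^i_t\wedge K}\widetilde h^i_{t,q}$ if $E^i_t>0$ and $\check h^i_t=0$ otherwise. Updates: $w_t=\frac{1}{s+1}\big(w_{t-1}+\sum_{i\in\mathcal S_t}(w^i_{t-1}-\eta\check h^i_t)\big)$; $w^i_t=w_t$ for $i\in\mathcal S_t$ and $w^i_t=w^i_{t-1}$ for $i\notin\mathcal S_t$. Define $\mu_t=\frac{1}{n+1}\big(w_t+\sum_{i=1}^n w^i_t\big)$ and $\Phi_t=\|w_t-\mu_t\|^2+\sum_{i=1}^n\|w^i_t-\mu_t\|^2$. All expectations appearing are assumed finite. *)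

theory Defs
  imports "HOL-Probability.Probability"
begin

(* Query points of the local stochastic-gradient loop of one client in one round.
   qpoint g z eta x m is the point at which the (m+1)-th oracle query is made:
   x - eta * sum_{r=1}^{m} htil_r, where htil_r = g(qpoint (r-1)) + z r. *)
fun qpoint :: "('v::euclidean_space \<Rightarrow> 'v) \<Rightarrow> (nat \<Rightarrow> 'v) \<Rightarrow> real \<Rightarrow> 'v \<Rightarrow> nat \<Rightarrow> 'v" where
  "qpoint g z eta x 0 = x"
| "qpoint g z eta x (Suc m) = qpoint g z eta x m - eta *\<^sub>R (g (qpoint g z eta x m) + z (Suc m))"

(* htil_q (q \<ge> 1): oracle answer grad f_i(query point) + noise z q *)
definition htil :: "('v::euclidean_space \<Rightarrow> 'v) \<Rightarrow> (nat \<Rightarrow> 'v) \<Rightarrow> real \<Rightarrow> 'v \<Rightarrow> nat \<Rightarrow> 'v" where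
  "htil g z eta x q = g (qpoint g z eta x (q - 1)) + z q"

definition fav_alpha :: "'a measure \<Rightarrow> bool \<Rightarrow> nat \<Rightarrow> (nat \<Rightarrow> nat \<Rightarrow> 'a \<Rightarrow> nat) \<Rightarrow> nat \<Rightarrow> nat \<Rightarrow> 'a \<Rightarrow> real" where
  "fav_alpha M stoch K E t i \<omega> =
     (if stoch then measure M {\<omega>'\<in>space M. 0 < E t i \<omega>'} * real (min (E t i \<omega>) K)
      else integral\<^sup>L M (\<lambda>\<omega>'. real (min (E t i \<omega>') K)))"

(* check-h^i_t computed from the local models ws = (w^i_{t-1})_i *)
definition hchk_from :: "(nat \<Rightarrow> 'v::euclidean_space \<Rightarrow> 'v) \<Rightarrow> (nat \<Rightarrow> nat \<Rightarrow> nat \<Rightarrow> 'a \<Rightarrow> 'v)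
   \<Rightarrow> (nat \<Rightarrow> nat \<Rightarrow> 'a \<Rightarrow> nat) \<Rightarrow> (nat \<Rightarrow> nat \<Rightarrow> 'a \<Rightarrow> real) \<Rightarrow> nat \<Rightarrow> real
   \<Rightarrow> nat \<Rightarrow> (nat \<Rightarrow> 'v) \<Rightarrow> 'a \<Rightarrow> nat \<Rightarrow> 'v" where
  "hchk_from grad xi E alpha K eta t ws \<omega> i =
     (if 0 < E t i \<omega>
      then inverse (alpha t i \<omega>) *\<^sub>R
             (\<Sum>q\<in>{1..min (E t i \<omega>) K}. htil (grad i) (\<lambda>q. xi t i q \<omega>) eta (ws i) q)
      else 0)"

(* state (w_t, (w^i_t)_i) of the FAVANO process *)
fun fav_state :: "nat \<Rightarrow> nat \<Rightarrow> real \<Rightarrow> (nat \<Rightarrow> 'v::euclidean_space \<Rightarrow> 'v) \<Rightarrow> 'v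
   \<Rightarrow> (nat \<Rightarrow> 'a \<Rightarrow> nat set) \<Rightarrow> (nat \<Rightarrow> nat \<Rightarrow> 'a \<Rightarrow> nat) \<Rightarrow> (nat \<Rightarrow> nat \<Rightarrow> nat \<Rightarrow> 'a \<Rightarrow> 'v)
   \<Rightarrow> (nat \<Rightarrow> nat \<Rightarrow> 'a \<Rightarrow> real) \<Rightarrow> nat \<Rightarrow> 'a \<Rightarrow> 'v \<times> (nat \<Rightarrow> 'v)" where
  "fav_state s K eta grad w0 S E xi alpha 0 \<omega> = (w0, \<lambda>i. w0)"
| "fav_state s K eta grad w0 S E xi alpha (Suc t) \<omega> =
     (let w = fst (fav_state s K eta grad w0 S E xi alpha t \<omega>);
          ws = snd (fav_state s K eta grad w0 S E xi alpha t \<omega>);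
          h = hchk_from grad xi E alpha K eta (Suc t) ws \<omega>;
          wn = (1 / (real s + 1)) *\<^sub>R (w + (\<Sum>i\<in>S (Suc t) \<omega>. ws i - eta *\<^sub>R h i))
      in (wn, \<lambda>i. if i \<in> S (Suc t) \<omega> then wn else ws i))"

(* check-h^i_t for t \<ge> 1 *)
definition fav_hchk where
  "fav_hchk s K eta grad w0 S E xi alpha t i \<omega> =
     hchk_from grad xi E alpha K eta t (snd (fav_state s K eta grad w0 S E xi alpha (t - 1) \<omega>)) \<omega> i"

definition fav_mu where
  "fav_mu n s K eta grad w0 S E xi alpha t \<omega> =
     (let st = fav_state s K eta grad w0 S E xi alpha t \<omega> in
       (1 / (real n + 1)) *\<^sub>R (fst st + (\<Sum>i<n. snd st i)))"

definition fav_Phi where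
  "fav_Phi n s K eta grad w0 S E xi alpha t \<omega> =
     (let st = fav_state s K eta grad w0 S E xi alpha t \<omega>;
          mu = fav_mu n s K eta grad w0 S E xi alpha t \<omega> in
       (norm (fst st - mu))\<^sup>2 + (\<Sum>i<n. (norm (snd st i - mu))\<^sup>2))"

definition ev_S :: "'a measure \<Rightarrow> (nat \<Rightarrow> 'a \<Rightarrow> nat set) \<Rightarrow> nat set \<Rightarrow> 'a set set" where
  "ev_S M S T = {S t -` A \<inter> space M | t A. t \<in> T}"

definition ev_E :: "'a measure \<Rightarrow> (nat \<Rightarrow> nat \<Rightarrow> 'a \<Rightarrow> nat) \<Rightarrow> nat set \<Rightarrow> nat set \<Rightarrow> 'a set set" where
  "ev_E M E T I = {E t i -` A \<inter> space M | t i A. t \<in> T \<and> i \<in> I}"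

definition ev_xi :: "'a measure \<Rightarrow> (nat \<Rightarrow> nat \<Rightarrow> nat \<Rightarrow> 'a \<Rightarrow> 'v::euclidean_space) \<Rightarrow> nat set \<Rightarrow> nat set \<Rightarrow> nat set \<Rightarrow> 'a set set" where
  "ev_xi M xi T I Q = {xi t i q -` B \<inter> space M | t i q B. t \<in> T \<and> i \<in> I \<and> q \<in> Q \<and> B \<in> sets borel}"

definition past_ev where
  "past_ev M n S E xi t = ev_S M S {1..t} \<union> ev_E M E {1..t} {..<n} \<union> ev_xi M xi {1..t} {..<n} {1..}"

end

theory Submission
  imports Defs
begin

text \<open>For a fixed client set \<open>A\<close> the server update is a deterministic function of the models and
  of the local increments. Splitting the potential with the parallel axis theorem and applying
  Young's inequality bounds the new potential by the old one, minus \<open>1 / (s + 1)\<close> times the squared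
  server-client distances over \<open>A\<close>, plus \<open>1 / (2 (s + 1))\<close> times the spread of \<open>A\<close> around the old
  centroid, plus \<open>3 s \<eta>\<^sup>2\<close> times the squared norms of the increments over \<open>A\<close>. Averaging over the \<open>n choose s\<close> equally likely client sets,
  each client lying in a fraction \<open>s / n\<close> of them, yields the factor \<open>1 - \<kappa>\<close>. Since \<open>S (t + 1)\<close> is
  independent of the models and the increments, \<open>E \<Phi> (t + 1)\<close> is exactly the average over \<open>A\<close> of the
  expected potential after the update with \<open>A\<close>.\<close>

lemma sq_add_le_weighted:
  fixes a b e :: real
  assumes "0 < e"
  shows "(a + b)\<^sup>2 \<le> (1 + e) * a\<^sup>2 + (1 + 1 / e) * b\<^sup>2"
proof -
  have "0 \<le> (e * a - b)\<^sup>2 / e" using assms by simp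
  also have "\<dots> = (1 + e) * a\<^sup>2 + (1 + 1 / e) * b\<^sup>2 - (a + b)\<^sup>2"
    using assms by (simp add: field_simps power2_eq_square)
  finally show ?thesis by simp
qed

lemma norm_add_squared_le_weighted:
  fixes x y :: "'v::real_normed_vector"
  assumes "0 < e"
  shows "(norm (x + y))\<^sup>2 \<le> (1 + e) * (norm x)\<^sup>2 + (1 + 1 / e) * (norm y)\<^sup>2"
proof -
  have "(norm (x + y))\<^sup>2 \<le> (norm x + norm y)\<^sup>2"
    by (simp add: norm_triangle_ineq power_mono)
  also have "\<dots> \<le> (1 + e) * (norm x)\<^sup>2 + (1 + 1 / e) * (norm y)\<^sup>2"
    using assms by (rule sq_add_le_weighted)
  finally show ?thesis .
qed

lemma norm_sum_squared_le_card:
  fixes v :: "'i \<Rightarrow> 'v::real_normed_vector"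
  shows "(norm (\<Sum>i\<in>A. v i))\<^sup>2 \<le> real (card A) * (\<Sum>i\<in>A. (norm (v i))\<^sup>2)"
proof -
  have "(norm (\<Sum>i\<in>A. v i))\<^sup>2 \<le> (\<Sum>i\<in>A. 1 * norm (v i))\<^sup>2"
    by (simp add: norm_sum power_mono)
  also have "\<dots> \<le> (\<Sum>i\<in>A. 1\<^sup>2) * (\<Sum>i\<in>A. (norm (v i))\<^sup>2)"
    by (rule Cauchy_Schwarz_ineq_sum)
  finally show ?thesis by simp
qed

lemma sum_norm_sq_parallel_axis:
  fixes w c :: "'v::real_inner" and f :: "'i \<Rightarrow> 'v"
  assumes I: "finite I" and m: "m = (1 / (real (card I) + 1)) *\<^sub>R (w + (\<Sum>i\<in>I. f i))"
  shows "(norm (w - c))\<^sup>2 + (\<Sum>i\<in>I. (norm (f i - c))\<^sup>2)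
     = (norm (w - m))\<^sup>2 + (\<Sum>i\<in>I. (norm (f i - m))\<^sup>2) + (real (card I) + 1) * (norm (m - c))\<^sup>2"
proof -
  have deviations_sum_zero: "(w - m) + (\<Sum>i\<in>I. f i - m) = 0"
  proof -
    have "(real (card I) + 1) *\<^sub>R m = w + (\<Sum>i\<in>I. f i)"
      unfolding m by simp
    then show ?thesis
      by (simp add: sum_subtractf algebra_simps scaleR_add_left sum_constant_scaleR)
  qed
  have expand: "(norm (a + (m - c)))\<^sup>2 = (norm a)\<^sup>2 + 2 * (a \<bullet> (m - c)) + (norm (m - c))\<^sup>2" for a
    unfolding power2_norm_eq_inner by (simp add: inner_add_left inner_add_right inner_commute)
  have "(norm (w - c))\<^sup>2 + (\<Sum>i\<in>I. (norm (f i - c))\<^sup>2)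
      = (norm ((w - m) + (m - c)))\<^sup>2 + (\<Sum>i\<in>I. (norm ((f i - m) + (m - c)))\<^sup>2)"
    by simp
  also have "\<dots> = (norm (w - m))\<^sup>2 + (\<Sum>i\<in>I. (norm (f i - m))\<^sup>2)
      + 2 * (((w - m) + (\<Sum>i\<in>I. f i - m)) \<bullet> (m - c)) + (real (card I) + 1) * (norm (m - c))\<^sup>2"
    unfolding expand
    by (simp add: sum.distrib sum_subtractf inner_add_left inner_diff_left inner_sum_left sum_distrib_left algebra_simps)
  finally show ?thesis
    unfolding deviations_sum_zero by simp
qed

section \<open>One server round\<close>

definition centroid :: "nat \<Rightarrow> 'v::real_vector \<times> (nat \<Rightarrow> 'v) \<Rightarrow> 'v" where
  "centroid n st = (1 / (real n + 1)) *\<^sub>R (fst st + (\<Sum>i<n. snd st i))"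

definition potential :: "nat \<Rightarrow> 'v::real_inner \<times> (nat \<Rightarrow> 'v) \<Rightarrow> real" where
  "potential n st = (norm (fst st - centroid n st))\<^sup>2 + (\<Sum>i<n. (norm (snd st i - centroid n st))\<^sup>2)"

definition round_update ::
    "nat \<Rightarrow> real \<Rightarrow> nat set \<Rightarrow> 'v::real_vector \<times> (nat \<Rightarrow> 'v) \<Rightarrow> (nat \<Rightarrow> 'v) \<Rightarrow> 'v \<times> (nat \<Rightarrow> 'v)" where
  "round_update s eta A st h =
     (let w' = (1 / (real s + 1)) *\<^sub>R (fst st + (\<Sum>i\<in>A. snd st i - eta *\<^sub>R h i))
      in (w', \<lambda>i. if i \<in> A then w' else snd st i))"

lemma potential_nonneg: "0 \<le> potential n st"
  unfolding potential_def by (intro add_nonneg_nonneg sum_nonneg) auto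

lemma potential_le_sum_norm_sq:
  fixes w c :: "'v::real_inner"
  shows "potential n (w, z) \<le> (norm (w - c))\<^sup>2 + (\<Sum>i<n. (norm (z i - c))\<^sup>2)"
  using sum_norm_sq_parallel_axis[of "{..<n}" "centroid n (w, z)" w z c]
  unfolding potential_def centroid_def by simp

lemma sum_norm_sq_diff_potential:
  fixes w :: "'v::real_inner"
  shows "(\<Sum>i<n. (norm (w - z i))\<^sup>2)
    = (real n + 2) * (norm (w - centroid n (w, z)))\<^sup>2 + (\<Sum>i<n. (norm (z i - centroid n (w, z)))\<^sup>2)"
  using sum_norm_sq_parallel_axis[of "{..<n}" "centroid n (w, z)" w z w]
  unfolding centroid_def by (simp add: norm_minus_commute algebra_simps)

lemma sum_norm_sq_le_centroid:
  fixes w :: "'v::real_inner" and z :: "'i \<Rightarrow> 'v"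
  assumes "finite A" "card A = s" "1 \<le> s"
  defines "m \<equiv> (1 / (real s + 1)) *\<^sub>R (w + (\<Sum>i\<in>A. z i))"
  shows "(\<Sum>i\<in>A. (norm (w - z i))\<^sup>2) \<le> (real s + 1) * ((norm (w - m))\<^sup>2 + (\<Sum>i\<in>A. (norm (z i - m))\<^sup>2))"
proof -
  have "(norm (w - z i))\<^sup>2 \<le> (1 + 1 / real s) * (norm (w - m))\<^sup>2 + (1 + real s) * (norm (z i - m))\<^sup>2" for i
    using norm_add_squared_le_weighted[of "1 / real s" "w - m" "m - z i"] assms(3)
    by (simp add: norm_minus_commute)
  then have "(\<Sum>i\<in>A. (norm (w - z i))\<^sup>2)
      \<le> (\<Sum>i\<in>A. (1 + 1 / real s) * (norm (w - m))\<^sup>2 + (1 + real s) * (norm (z i - m))\<^sup>2)"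
    by (rule sum_mono)
  also have "\<dots> = real s * ((1 + 1 / real s) * (norm (w - m))\<^sup>2) + (1 + real s) * (\<Sum>i\<in>A. (norm (z i - m))\<^sup>2)"
    using assms(2) by (simp add: sum.distrib sum_distrib_left)
  also have "\<dots> = (real s + 1) * ((norm (w - m))\<^sup>2 + (\<Sum>i\<in>A. (norm (z i - m))\<^sup>2))"
    using assms(3) by (simp add: field_simps)
  finally show ?thesis .
qed

lemma norm_sq_scaled_sum_le:
  fixes h :: "'i \<Rightarrow> 'v::real_normed_vector"
  assumes "card A = s" "1 \<le> s"
  shows "(real s + 1) * (2 * real s + 3) * (norm ((eta / (real s + 1)) *\<^sub>R (\<Sum>i\<in>A. h i)))\<^sup>2
    \<le> 3 * real s * eta\<^sup>2 * (\<Sum>i\<in>A. (norm (h i))\<^sup>2)"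
proof -
  have norm_scaled: "(norm ((eta / (real s + 1)) *\<^sub>R (\<Sum>i\<in>A. h i)))\<^sup>2 = (eta / (real s + 1))\<^sup>2 * (norm (\<Sum>i\<in>A. h i))\<^sup>2"
    by (simp add: power_mult_distrib power_divide)
  \<comment> \<open>stated for an abstract \<open>q > 0\<close>, so that \<open>field_simps\<close> can clear the denominator \<open>s + 1\<close>\<close>
  have "q * (2 * real s + 3) * ((eta / q)\<^sup>2 * N) = (2 * real s + 3) / q * (eta\<^sup>2 * N)" if "0 < q" for q N :: real
    using that by (simp add: field_simps power2_eq_square)
  then have "(real s + 1) * (2 * real s + 3) * (norm ((eta / (real s + 1)) *\<^sub>R (\<Sum>i\<in>A. h i)))\<^sup>2
      = (2 * real s + 3) / (real s + 1) * (eta\<^sup>2 * (norm (\<Sum>i\<in>A. h i))\<^sup>2)"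
    unfolding norm_scaled by simp
  also have "\<dots> \<le> 3 * (eta\<^sup>2 * (real s * (\<Sum>i\<in>A. (norm (h i))\<^sup>2)))"
  proof (rule mult_mono)
    show "eta\<^sup>2 * (norm (\<Sum>i\<in>A. h i))\<^sup>2 \<le> eta\<^sup>2 * (real s * (\<Sum>i\<in>A. (norm (h i))\<^sup>2))"
      using norm_sum_squared_le_card[of h A] assms(1) by (intro mult_left_mono) auto
  qed (auto simp: field_simps intro!: sum_nonneg mult_nonneg_nonneg)
  finally show ?thesis by (simp add: ac_simps)
qed

lemma norm_sq_round_update_server_le:
  fixes w c :: "'v::real_inner" and z h :: "nat \<Rightarrow> 'v"
  assumes "card A = s" "1 \<le> s"
  defines "m \<equiv> (1 / (real s + 1)) *\<^sub>R (w + (\<Sum>i\<in>A. z i))"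
  shows "(real s + 1) * (norm (fst (round_update s eta A (w, z) h) - c))\<^sup>2
    \<le> (real s + 1) * (1 + 1 / (2 * (real s + 1))) * (norm (m - c))\<^sup>2 + 3 * real s * eta\<^sup>2 * (\<Sum>i\<in>A. (norm (h i))\<^sup>2)"
proof -
  define d where "d = (eta / (real s + 1)) *\<^sub>R (\<Sum>i\<in>A. h i)"
  have server: "fst (round_update s eta A (w, z) h) - c = (m - c) + (- d)"
    unfolding round_update_def m_def d_def
    by (simp add: sum_subtractf scaleR_sum_right[symmetric] algebra_simps)
  \<comment> \<open>Young's inequality with \<open>\<epsilon> = 1 / (2 (s + 1))\<close>, for which \<open>1 + 1 / \<epsilon> = 2 s + 3\<close>\<close>
  have "(norm (fst (round_update s eta A (w, z) h) - c))\<^sup>2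
      \<le> (1 + 1 / (2 * (real s + 1))) * (norm (m - c))\<^sup>2 + (2 * real s + 3) * (norm d)\<^sup>2"
    unfolding server using norm_add_squared_le_weighted[of "1 / (2 * (real s + 1))" "m - c" "- d"]
    by (simp add: add.commute)
  then have "(real s + 1) * (norm (fst (round_update s eta A (w, z) h) - c))\<^sup>2
      \<le> (real s + 1) * ((1 + 1 / (2 * (real s + 1))) * (norm (m - c))\<^sup>2 + (2 * real s + 3) * (norm d)\<^sup>2)"
    by (rule mult_left_mono) simp
  also have "\<dots> = (real s + 1) * (1 + 1 / (2 * (real s + 1))) * (norm (m - c))\<^sup>2
      + (real s + 1) * (2 * real s + 3) * (norm d)\<^sup>2"
    by (rule distrib_left[THEN trans]) (simp only: mult.assoc)
  also have "(real s + 1) * (2 * real s + 3) * (norm d)\<^sup>2 \<le> 3 * real s * eta\<^sup>2 * (\<Sum>i\<in>A. (norm (h i))\<^sup>2)"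
    unfolding d_def by (rule norm_sq_scaled_sum_le[OF assms(1,2)])
  finally show ?thesis by simp
qed

lemma potential_round_update_le_old_centroid:
  fixes w :: "'v::real_inner"
  assumes "A \<subseteq> {..<n}" "card A = s"
  shows "potential n (round_update s eta A (w, z) h)
    \<le> (real s + 1) * (norm (fst (round_update s eta A (w, z) h) - centroid n (w, z)))\<^sup>2
       + (\<Sum>i\<in>{..<n} - A. (norm (z i - centroid n (w, z)))\<^sup>2)"
proof -
  define w' where "w' = (1 / (real s + 1)) *\<^sub>R (w + (\<Sum>i\<in>A. z i - eta *\<^sub>R h i))"
  define \<mu> where "\<mu> = centroid n (w, z)"
  have update: "round_update s eta A (w, z) h = (w', \<lambda>i. if i \<in> A then w' else z i)"
    unfolding round_update_def w'_def Let_def by (simp add: fun_eq_iff)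
  have "potential n (round_update s eta A (w, z) h)
      \<le> (norm (w' - \<mu>))\<^sup>2 + (\<Sum>i<n. (norm ((if i \<in> A then w' else z i) - \<mu>))\<^sup>2)"
    unfolding update by (rule potential_le_sum_norm_sq)
  also have "(\<Sum>i<n. (norm ((if i \<in> A then w' else z i) - \<mu>))\<^sup>2)
      = real s * (norm (w' - \<mu>))\<^sup>2 + (\<Sum>i\<in>{..<n} - A. (norm (z i - \<mu>))\<^sup>2)"
  proof -
    have "finite A" using assms(1) finite_subset by blast
    then show ?thesis
      using sum.subset_diff[OF assms(1), of "\<lambda>i. (norm ((if i \<in> A then w' else z i) - \<mu>))\<^sup>2"] assms(2)
      by simp
  qed
  finally show ?thesis
    unfolding update \<mu>_def by (simp add: algebra_simps)
qed

lemma potential_round_update_le: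
  fixes w :: "'v::real_inner" and z h :: "nat \<Rightarrow> 'v"
  assumes A: "A \<subseteq> {..<n}" "card A = s" "1 \<le> s"
  defines "\<mu> \<equiv> centroid n (w, z)"
  shows "potential n (round_update s eta A (w, z) h) \<le> potential n (w, z)
     - (1 / (real s + 1)) * (\<Sum>i\<in>A. (norm (w - z i))\<^sup>2)
     + (1 / (2 * (real s + 1))) * ((norm (w - \<mu>))\<^sup>2 + (\<Sum>i\<in>A. (norm (z i - \<mu>))\<^sup>2))
     + 3 * real s * eta\<^sup>2 * (\<Sum>i\<in>A. (norm (h i))\<^sup>2)"
proof -
  have finA: "finite A" using A(1) finite_subset by blast
  define \<epsilon> :: real where "\<epsilon> = 1 / (2 * (real s + 1))"
  define m where "m = (1 / (real s + 1)) *\<^sub>R (w + (\<Sum>i\<in>A. z i))"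
  define W where "W = (norm (w - \<mu>))\<^sup>2 + (\<Sum>i\<in>A. (norm (z i - \<mu>))\<^sup>2)"
  define D where "D = (norm (w - m))\<^sup>2 + (\<Sum>i\<in>A. (norm (z i - m))\<^sup>2)"
  define R where "R = (\<Sum>i\<in>{..<n} - A. (norm (z i - \<mu>))\<^sup>2)"
  define H where "H = (\<Sum>i\<in>A. (norm (h i))\<^sup>2)"
  have "potential n (w, z) = W + R"
    unfolding W_def R_def potential_def \<mu>_def using A(1) finA
    by (simp add: sum.subset_diff[of A "{..<n}"])
  moreover have parallel: "W = D + (real s + 1) * (norm (m - \<mu>))\<^sup>2"
    unfolding W_def D_def using sum_norm_sq_parallel_axis[OF finA, of m w z \<mu>] A(2) m_def by simp
  moreover have "(1 / (real s + 1)) * (\<Sum>i\<in>A. (norm (w - z i))\<^sup>2) \<le> D"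
    using sum_norm_sq_le_centroid[OF finA A(2,3), of w z] unfolding D_def m_def
    by (simp add: field_simps)
  moreover have "0 \<le> \<epsilon> * D" unfolding D_def \<epsilon>_def by (intro mult_nonneg_nonneg add_nonneg_nonneg sum_nonneg) auto
  moreover have "potential n (round_update s eta A (w, z) h) \<le> (real s + 1) * (1 + \<epsilon>) * (norm (m - \<mu>))\<^sup>2 + 3 * real s * eta\<^sup>2 * H + R"
    using potential_round_update_le_old_centroid[OF A(1,2), of eta w z h]
      norm_sq_round_update_server_le[OF A(2,3), of eta w z h \<mu>]
    unfolding R_def H_def \<mu>_def m_def \<epsilon>_def by linarith
  ultimately show ?thesis
    unfolding W_def[symmetric] H_def[symmetric] \<epsilon>_def[symmetric] by (simp add: algebra_simps)
qed

lemma potential_round_update_le_double: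
  fixes w :: "'v::real_inner" and z h :: "nat \<Rightarrow> 'v"
  assumes A: "A \<subseteq> {..<n}" "card A = s" "1 \<le> s"
  shows "potential n (round_update s eta A (w, z) h)
    \<le> 2 * potential n (w, z) + 3 * real s * eta\<^sup>2 * (\<Sum>i<n. (norm (h i))\<^sup>2)"
proof -
  define \<mu> where "\<mu> = centroid n (w, z)"
  have "(1 / (2 * (real s + 1))) * ((norm (w - \<mu>))\<^sup>2 + (\<Sum>i\<in>A. (norm (z i - \<mu>))\<^sup>2))
      \<le> (norm (w - \<mu>))\<^sup>2 + (\<Sum>i<n. (norm (z i - \<mu>))\<^sup>2)"
  proof -
    have "(\<Sum>i\<in>A. (norm (z i - \<mu>))\<^sup>2) \<le> (\<Sum>i<n. (norm (z i - \<mu>))\<^sup>2)"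
      using A(1) by (intro sum_mono2) auto
    moreover have "(1 / (2 * (real s + 1))) * ((norm (w - \<mu>))\<^sup>2 + (\<Sum>i\<in>A. (norm (z i - \<mu>))\<^sup>2))
        \<le> (norm (w - \<mu>))\<^sup>2 + (\<Sum>i\<in>A. (norm (z i - \<mu>))\<^sup>2)"
      by (intro mult_left_le_one_le add_nonneg_nonneg sum_nonneg) auto
    ultimately show ?thesis by linarith
  qed
  also have "\<dots> = potential n (w, z)"
    unfolding potential_def \<mu>_def by simp
  finally have spread: "(1 / (2 * (real s + 1))) * ((norm (w - \<mu>))\<^sup>2 + (\<Sum>i\<in>A. (norm (z i - \<mu>))\<^sup>2))
      \<le> potential n (w, z)" .
  have "(\<Sum>i\<in>A. (norm (h i))\<^sup>2) \<le> (\<Sum>i<n. (norm (h i))\<^sup>2)"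
    using A(1) by (intro sum_mono2) auto
  then have noise: "3 * real s * eta\<^sup>2 * (\<Sum>i\<in>A. (norm (h i))\<^sup>2) \<le> 3 * real s * eta\<^sup>2 * (\<Sum>i<n. (norm (h i))\<^sup>2)"
    by (intro mult_left_mono) auto
  have "0 \<le> (1 / (real s + 1)) * (\<Sum>i\<in>A. (norm (w - z i))\<^sup>2)"
    by (simp add: sum_nonneg)
  then show ?thesis
    using potential_round_update_le[where w = w and z = z and eta = eta and h = h, OF A] spread noise
    unfolding \<mu>_def by linarith
qed

section \<open>Averaging over client sets\<close>

definition client_sets :: "nat \<Rightarrow> nat \<Rightarrow> nat set set" where
  "client_sets n s = {A. A \<subseteq> {..<n} \<and> card A = s}"

lemma finite_client_sets: "finite (client_sets n s)"
  unfolding client_sets_def by (rule finite_subset[of _ "Pow {..<n}"]) auto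

lemma card_client_sets: "card (client_sets n s) = n choose s"
  unfolding client_sets_def using n_subsets[of "{..<n}" s] by simp

lemma card_client_sets_mem:
  assumes "i < n" "1 \<le> s"
  shows "card {A \<in> client_sets n s. i \<in> A} = (n - 1) choose (s - 1)"
proof -
  have "bij_betw (\<lambda>A. A - {i}) {A \<in> client_sets n s. i \<in> A} {B. B \<subseteq> {..<n} - {i} \<and> card B = s - 1}"
  proof (rule bij_betw_byWitness[where f' = "insert i"])
    show "(\<lambda>A. A - {i}) ` {A \<in> client_sets n s. i \<in> A} \<subseteq> {B. B \<subseteq> {..<n} - {i} \<and> card B = s - 1}"
      by (auto simp: client_sets_def finite_subset)
    show "insert i ` {B. B \<subseteq> {..<n} - {i} \<and> card B = s - 1} \<subseteq> {A \<in> client_sets n s. i \<in> A}"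
      using assms by (auto simp: client_sets_def finite_subset card_insert_if)
  qed auto
  then have "card {A \<in> client_sets n s. i \<in> A} = card {B. B \<subseteq> {..<n} - {i} \<and> card B = s - 1}"
    by (rule bij_betw_same_card)
  also have "\<dots> = card ({..<n} - {i}) choose (s - 1)"
    by (rule n_subsets) auto
  finally show ?thesis using assms(1) by simp
qed

lemma sum_client_sets_sum:
  fixes F :: "nat \<Rightarrow> real"
  assumes "1 \<le> s" "s \<le> n"
  shows "(\<Sum>A\<in>client_sets n s. \<Sum>i\<in>A. F i) = real (n choose s) * (real s / real n) * (\<Sum>i<n. F i)"
proof -
  have "(\<Sum>A\<in>client_sets n s. \<Sum>i\<in>A. F i) = (\<Sum>A\<in>client_sets n s. \<Sum>i<n. if i \<in> A then F i else 0)"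
  proof (rule sum.cong[OF refl])
    fix A assume "A \<in> client_sets n s"
    then have "A \<subseteq> {..<n}" unfolding client_sets_def by simp
    then show "(\<Sum>i\<in>A. F i) = (\<Sum>i<n. if i \<in> A then F i else 0)"
      by (simp add: sum.If_cases inf.absorb2)
  qed
  also have "\<dots> = (\<Sum>i<n. \<Sum>A\<in>client_sets n s. if i \<in> A then F i else 0)"
    by (rule sum.swap)
  also have "\<dots> = (\<Sum>i<n. real ((n - 1) choose (s - 1)) * F i)"
  proof (intro sum.cong refl)
    fix i assume "i \<in> {..<n}"
    then show "(\<Sum>A\<in>client_sets n s. if i \<in> A then F i else 0) = real ((n - 1) choose (s - 1)) * F i"
      using card_client_sets_mem[of i n s] assms finite_client_sets
      by (simp add: sum.If_cases Int_def)
  qed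
  also have "real ((n - 1) choose (s - 1)) = real (n choose s) * (real s / real n)"
  proof -
    have "s * (n choose s) = n * ((n - 1) choose (s - 1))"
      using assms by (intro times_binomial_minus1_eq) auto
    then have "real s * real (n choose s) = real n * real ((n - 1) choose (s - 1))"
      by (metis of_nat_mult)
    then show ?thesis using assms by (simp add: field_simps)
  qed
  finally show ?thesis by (simp add: sum_distrib_left)
qed

lemma contraction_coefficient_le:
  fixes n s U T :: real
  assumes "1 \<le> s" "s \<le> n" "0 \<le> U" "0 \<le> T"
  shows "U + T - 1 / (s + 1) * (s / n) * ((n + 2) * U + T) + 1 / (2 * (s + 1)) * (U + s / n * T)
    \<le> (1 - (1 / n) * (s * (n - s)) / (2 * (n + 1) * (s + 1))) * (U + T)"
proof -
  define b where "b = s / (2 * n * (s + 1))"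
  have pos: "0 < n" "0 < s + 1" using assms(1,2) by auto
  have "(1 / n) * (s * (n - s)) / (2 * (n + 1) * (s + 1)) = b * ((n - s) / (n + 1))"
    unfolding b_def by (simp add: field_simps)
  also have "\<dots> \<le> b"
    using assms(1,2) by (intro mult_left_le) (auto simp: b_def)
  finally have kappa_le: "(1 / n) * (s * (n - s)) / (2 * (n + 1) * (s + 1)) * (U + T) \<le> b * (U + T)"
    using assms(3,4) by (intro mult_right_mono) auto
  define D where "D = 2 * n * (s + 1)"
  have D: "0 < D" unfolding D_def using pos by simp
  have fractions: "1 / (s + 1) * (s / n) = 2 * s / D" "1 / (2 * (s + 1)) = n / D" "b = s / D"
    unfolding D_def b_def using pos by auto
  have excess: "1 / (s + 1) * (s / n) * ((n + 2) * U + T) - 1 / (2 * (s + 1)) * (U + s / n * T)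
      - b * (U + T) = (2 * s * (n + 2) - n - s) / D * U"
    unfolding fractions using D pos by (simp add: field_simps)
  have "n * 1 \<le> n * s" using assms(1) pos(1) by (intro mult_left_mono) auto
  then have "0 \<le> 2 * s * (n + 2) - n - s" using assms(1,2) by (simp add: algebra_simps; linarith)
  then have "(2 * s * (n + 2) - n - s) / D * U \<ge> 0"
    using assms(3) D by simp
  then show ?thesis using excess kappa_le by (simp add: algebra_simps)
qed

lemma sum_client_sets_potential_round_update_le:
  fixes w :: "'v::real_inner" and z h :: "nat \<Rightarrow> 'v"
  assumes s: "1 \<le> s" "s \<le> n"
  defines "\<mu> \<equiv> centroid n (w, z)"
  shows "(\<Sum>A\<in>client_sets n s. potential n (round_update s eta A (w, z) h))
    \<le> real (n choose s) * (potential n (w, z)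
        - 1 / (real s + 1) * (real s / real n) * (\<Sum>i<n. (norm (w - z i))\<^sup>2)
        + 1 / (2 * (real s + 1)) * ((norm (w - \<mu>))\<^sup>2 + real s / real n * (\<Sum>i<n. (norm (z i - \<mu>))\<^sup>2))
        + 3 * real s * eta\<^sup>2 * (real s / real n) * (\<Sum>i<n. (norm (h i))\<^sup>2))"
proof -
  have "(\<Sum>A\<in>client_sets n s. potential n (round_update s eta A (w, z) h))
      \<le> (\<Sum>A\<in>client_sets n s. potential n (w, z)
           - 1 / (real s + 1) * (\<Sum>i\<in>A. (norm (w - z i))\<^sup>2)
           + 1 / (2 * (real s + 1)) * ((norm (w - \<mu>))\<^sup>2 + (\<Sum>i\<in>A. (norm (z i - \<mu>))\<^sup>2))
           + 3 * real s * eta\<^sup>2 * (\<Sum>i\<in>A. (norm (h i))\<^sup>2))"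
    using s(1) unfolding \<mu>_def client_sets_def by (intro sum_mono potential_round_update_le) auto
  also have "\<dots> = real (n choose s) * potential n (w, z)
        - 1 / (real s + 1) * (\<Sum>A\<in>client_sets n s. \<Sum>i\<in>A. (norm (w - z i))\<^sup>2)
        + 1 / (2 * (real s + 1)) * (real (n choose s) * (norm (w - \<mu>))\<^sup>2
            + (\<Sum>A\<in>client_sets n s. \<Sum>i\<in>A. (norm (z i - \<mu>))\<^sup>2))
        + 3 * real s * eta\<^sup>2 * (\<Sum>A\<in>client_sets n s. \<Sum>i\<in>A. (norm (h i))\<^sup>2)"
    by (simp only: sum.distrib sum_subtractf sum_distrib_left[symmetric] sum_constant card_client_sets)
  also have "\<dots> = real (n choose s) * (potential n (w, z)
        - 1 / (real s + 1) * (real s / real n) * (\<Sum>i<n. (norm (w - z i))\<^sup>2)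
        + 1 / (2 * (real s + 1)) * ((norm (w - \<mu>))\<^sup>2 + real s / real n * (\<Sum>i<n. (norm (z i - \<mu>))\<^sup>2))
        + 3 * real s * eta\<^sup>2 * (real s / real n) * (\<Sum>i<n. (norm (h i))\<^sup>2))"
  proof -
    have "C * P - a * (C * q * X) + e * (C * U + C * q * T) + b * (C * q * H)
        = C * (P - a * q * X + e * (U + q * T) + b * q * H)" for C P a q X e U T b H :: real
      by (simp add: algebra_simps)
    then show ?thesis unfolding sum_client_sets_sum[OF s] .
  qed
  finally show ?thesis .
qed

lemma mean_potential_round_update_le:
  fixes w :: "'v::real_inner" and z h :: "nat \<Rightarrow> 'v"
  assumes s: "1 \<le> s" "s \<le> n"
  shows "(1 / real (n choose s)) * (\<Sum>A\<in>client_sets n s. potential n (round_update s eta A (w, z) h))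
    \<le> (1 - (1 / real n) * (real s * (real n - real s)) / (2 * (real n + 1) * (real s + 1))) * potential n (w, z)
       + 3 * (real s)\<^sup>2 / real n * eta\<^sup>2 * (\<Sum>i<n. (norm (h i))\<^sup>2)"
proof -
  define \<mu> where "\<mu> = centroid n (w, z)"
  define U where "U = (norm (w - \<mu>))\<^sup>2"
  define T where "T = (\<Sum>i<n. (norm (z i - \<mu>))\<^sup>2)"
  define H where "H = (\<Sum>i<n. (norm (h i))\<^sup>2)"
  have C: "0 < real (n choose s)" using s by simp
  have potential: "potential n (w, z) = U + T"
    unfolding potential_def U_def T_def \<mu>_def by simp
  have "(1 / real (n choose s)) * (\<Sum>A\<in>client_sets n s. potential n (round_update s eta A (w, z) h))
      \<le> U + T - 1 / (real s + 1) * (real s / real n) * (\<Sum>i<n. (norm (w - z i))\<^sup>2)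
        + 1 / (2 * (real s + 1)) * (U + real s / real n * T)
        + 3 * real s * eta\<^sup>2 * (real s / real n) * H"
    using mult_left_mono[OF sum_client_sets_potential_round_update_le[OF s, of eta w z h], of "1 / real (n choose s)"] C
    unfolding \<mu>_def[symmetric] potential U_def[symmetric] T_def[symmetric] H_def[symmetric] by simp
  also have "\<dots> = U + T - 1 / (real s + 1) * (real s / real n) * ((real n + 2) * U + T)
        + 1 / (2 * (real s + 1)) * (U + real s / real n * T)
        + 3 * (real s)\<^sup>2 / real n * eta\<^sup>2 * H"
    unfolding sum_norm_sq_diff_potential \<mu>_def[symmetric] U_def[symmetric] T_def[symmetric]
    by (simp add: power2_eq_square)
  also have "\<dots> \<le> (1 - (1 / real n) * (real s * (real n - real s)) / (2 * (real n + 1) * (real s + 1))) * (U + T)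
      + 3 * (real s)\<^sup>2 / real n * eta\<^sup>2 * H"
    using contraction_coefficient_le[of "real s" "real n" U T] s by (simp add: U_def T_def sum_nonneg)
  finally show ?thesis unfolding potential H_def .
qed

section \<open>Measurability\<close>

lemma difference_quotients_tendsto_gradient:
  fixes F :: "'v::euclidean_space \<Rightarrow> real"
  assumes "(F has_derivative (\<lambda>h. g \<bullet> h)) (at x)"
  shows "(\<lambda>k. (F (x + inverse (real (Suc k)) *\<^sub>R b) - F x) / inverse (real (Suc k))) \<longlonglongrightarrow> g \<bullet> b"
proof -
  let ?\<phi> = "\<lambda>r::real. F (x + r *\<^sub>R b)"
  have line: "((\<lambda>r::real. x + r *\<^sub>R b) has_derivative (\<lambda>r. r *\<^sub>R b)) (at 0)"
    by (auto intro!: derivative_eq_intros)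
  have "((F \<circ> (\<lambda>r::real. x + r *\<^sub>R b)) has_derivative ((\<lambda>h. g \<bullet> h) \<circ> (\<lambda>r. r *\<^sub>R b))) (at 0)"
    by (rule diff_chain_at[OF line]) (use assms in simp)
  moreover have "(\<lambda>h. g \<bullet> h) \<circ> (\<lambda>r. r *\<^sub>R b) = (*) (g \<bullet> b)"
    by (auto simp: fun_eq_iff)
  ultimately have "(?\<phi> has_field_derivative (g \<bullet> b)) (at 0)"
    unfolding has_field_derivative_def by (simp add: o_def)
  then have slope: "((\<lambda>y. (?\<phi> y - ?\<phi> 0) / (y - 0)) \<longlongrightarrow> g \<bullet> b) (at 0)"
    by (simp add: has_field_derivative_iff)
  have "filterlim (\<lambda>k. inverse (real (Suc k))) (at (0::real)) sequentially"
    unfolding filterlim_at using LIMSEQ_inverse_real_of_nat by auto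
  from filterlim_compose[OF slope this] show ?thesis by simp
qed

lemma borel_measurable_gradient:
  fixes F :: "'v::euclidean_space \<Rightarrow> real"
  assumes deriv: "\<And>x. (F has_derivative (\<lambda>h. g x \<bullet> h)) (at x)"
  shows "g \<in> borel_measurable borel"
proof -
  have F: "continuous_on UNIV F"
    by (intro continuous_at_imp_continuous_on ballI has_derivative_continuous[OF deriv])
  have component: "(\<lambda>x. g x \<bullet> b) \<in> borel_measurable borel" for b
  proof (rule borel_measurable_LIMSEQ_real)
    show "(\<lambda>x. (F (x + inverse (real (Suc k)) *\<^sub>R b) - F x) / inverse (real (Suc k))) \<in> borel_measurable borel" for k
    proof -
      have "continuous_on UNIV (\<lambda>x. (F (x + inverse (real (Suc k)) *\<^sub>R b) - F x) / inverse (real (Suc k)))"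
        by (intro continuous_intros continuous_on_compose2[OF F]) auto
      then show ?thesis by (rule borel_measurable_continuous_onI)
    qed
  qed (rule difference_quotients_tendsto_gradient[OF deriv])
  have "g = (\<lambda>x. \<Sum>b\<in>Basis. (g x \<bullet> b) *\<^sub>R b)"
    by (simp add: euclidean_representation)
  also have "\<dots> \<in> borel_measurable borel"
    using component by (intro borel_measurable_sum borel_measurable_scaleR) auto
  finally show ?thesis .
qed

lemma borel_measurable_qpoint:
  fixes g :: "'v::euclidean_space \<Rightarrow> 'v"
  assumes g: "g \<in> borel_measurable borel"
    and z: "\<And>q. 1 \<le> q \<Longrightarrow> z q \<in> borel_measurable N"
    and x: "x \<in> borel_measurable N"
  shows "(\<lambda>\<omega>. qpoint g (\<lambda>q. z q \<omega>) eta (x \<omega>) m) \<in> borel_measurable N"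
proof (induction m)
  case 0
  then show ?case using x by simp
next
  case (Suc m)
  have "(\<lambda>\<omega>. g (qpoint g (\<lambda>q. z q \<omega>) eta (x \<omega>) m)) \<in> borel_measurable N"
    using measurable_compose[OF Suc g] .
  then show ?case using Suc z[of "Suc m"] by simp
qed

lemma borel_measurable_hchk_from:
  fixes grad :: "nat \<Rightarrow> 'v::euclidean_space \<Rightarrow> 'v"
  assumes grad: "grad i \<in> borel_measurable borel"
    and xi: "\<And>q. 1 \<le> q \<Longrightarrow> xi t i q \<in> borel_measurable N"
    and ws: "(\<lambda>\<omega>. ws \<omega> i) \<in> borel_measurable N"
    and E: "E t i \<in> N \<rightarrow>\<^sub>M count_space UNIV"
    and alpha: "alpha t i \<in> borel_measurable N"
  shows "(\<lambda>\<omega>. hchk_from grad xi E alpha K eta t (ws \<omega>) \<omega> i) \<in> borel_measurable N"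
proof -
  let ?h = "\<lambda>q \<omega>. htil (grad i) (\<lambda>q. xi t i q \<omega>) eta (ws \<omega> i) q"
  have h: "?h q \<in> borel_measurable N" if "1 \<le> q" for q
    unfolding htil_def
    using measurable_compose[OF borel_measurable_qpoint[where z = "xi t i", OF grad xi ws] grad] xi[OF that]
    by simp
  have E_sets: "{\<omega> \<in> space N. P (E t i \<omega>)} \<in> sets N" for P
    using measurable_sets[OF E, of "{k. P k}"] by (simp add: vimage_def Int_def conj_commute)
  have truncated_sum: "(\<Sum>q\<in>{1..min (E t i \<omega>) K}. ?h q \<omega>) = (\<Sum>q\<in>{1..K}. if q \<le> E t i \<omega> then ?h q \<omega> else 0)" for \<omega>
  proof -
    have "{1..K} \<inter> {q. q \<le> E t i \<omega>} = {1..min (E t i \<omega>) K}" by auto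
    then show ?thesis by (simp add: sum.If_cases)
  qed
  have "(\<lambda>\<omega>. \<Sum>q\<in>{1..K}. if q \<le> E t i \<omega> then ?h q \<omega> else 0) \<in> borel_measurable N"
    using h E_sets by (intro borel_measurable_sum measurable_If) auto
  then have "(\<lambda>\<omega>. if 0 < E t i \<omega> then inverse (alpha t i \<omega>) *\<^sub>R
        (\<Sum>q\<in>{1..K}. if q \<le> E t i \<omega> then ?h q \<omega> else 0) else 0) \<in> borel_measurable N"
    using alpha E_sets by (intro measurable_If borel_measurable_scaleR borel_measurable_inverse) auto
  then show ?thesis unfolding hchk_from_def truncated_sum .
qed

lemma borel_measurable_sum_random_set:
  fixes g :: "'i \<Rightarrow> 'a \<Rightarrow> 'v::euclidean_space"
  assumes "finite \<F>" and R: "\<And>\<omega>. \<omega> \<in> space N \<Longrightarrow> R \<omega> \<in> \<F>"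
    and R_sets: "\<And>A. A \<in> \<F> \<Longrightarrow> {\<omega> \<in> space N. R \<omega> = A} \<in> sets N"
    and g: "\<And>A i. A \<in> \<F> \<Longrightarrow> i \<in> A \<Longrightarrow> g i \<in> borel_measurable N"
  shows "(\<lambda>\<omega>. \<Sum>i\<in>R \<omega>. g i \<omega>) \<in> borel_measurable N"
proof -
  have "(\<lambda>\<omega>. \<Sum>A\<in>\<F>. indicator {\<omega> \<in> space N. R \<omega> = A} \<omega> *\<^sub>R (\<Sum>i\<in>A. g i \<omega>)) \<in> borel_measurable N"
  proof (rule borel_measurable_sum)
    fix A assume "A \<in> \<F>"
    then show "(\<lambda>\<omega>. indicator {\<omega> \<in> space N. R \<omega> = A} \<omega> *\<^sub>R (\<Sum>i\<in>A. g i \<omega>)) \<in> borel_measurable N"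
      using R_sets g by (intro borel_measurable_scaleR borel_measurable_indicator borel_measurable_sum) auto
  qed
  moreover have "(\<Sum>A\<in>\<F>. indicator {\<omega> \<in> space N. R \<omega> = A} \<omega> *\<^sub>R (\<Sum>i\<in>A. g i \<omega>)) = (\<Sum>i\<in>R \<omega>. g i \<omega>)"
    if "\<omega> \<in> space N" for \<omega>
  proof -
    have "(\<Sum>A\<in>\<F>. indicator {\<omega> \<in> space N. R \<omega> = A} \<omega> *\<^sub>R (\<Sum>i\<in>A. g i \<omega>))
        = (\<Sum>A\<in>\<F>. if A = R \<omega> then (\<Sum>i\<in>A. g i \<omega>) else 0)"
      using that by (intro sum.cong) (auto simp: indicator_def)
    then show ?thesis using R[OF that] \<open>finite \<F>\<close> by (simp add: sum.delta')
  qed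
  ultimately show ?thesis by (rule measurable_cong[THEN iffD1, rotated])
qed

lemma sets_mem_random_set:
  assumes "finite \<F>" and R: "\<And>\<omega>. \<omega> \<in> space N \<Longrightarrow> R \<omega> \<in> \<F>"
    and R_sets: "\<And>A. A \<in> \<F> \<Longrightarrow> {\<omega> \<in> space N. R \<omega> = A} \<in> sets N"
  shows "{\<omega> \<in> space N. i \<in> R \<omega>} \<in> sets N"
proof -
  have "{\<omega> \<in> space N. i \<in> R \<omega>} = (\<Union>A\<in>{A \<in> \<F>. i \<in> A}. {\<omega> \<in> space N. R \<omega> = A})"
    using R by auto
  also have "\<dots> \<in> sets N"
    using R_sets \<open>finite \<F>\<close> by (intro sets.finite_UN) auto
  finally show ?thesis .
qed

lemma borel_measurable_potential:
  fixes X :: "'a \<Rightarrow> 'v::euclidean_space \<times> (nat \<Rightarrow> 'v)"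
  assumes "(\<lambda>\<omega>. fst (X \<omega>)) \<in> borel_measurable N"
    and "\<And>i. i < n \<Longrightarrow> (\<lambda>\<omega>. snd (X \<omega>) i) \<in> borel_measurable N"
  shows "(\<lambda>\<omega>. potential n (X \<omega>)) \<in> borel_measurable N"
proof -
  have "(\<lambda>\<omega>. centroid n (X \<omega>)) \<in> borel_measurable N"
    unfolding centroid_def using assms by (intro borel_measurable_scaleR borel_measurable_add borel_measurable_sum) auto
  then show ?thesis
    unfolding potential_def using assms
    by (intro borel_measurable_add borel_measurable_sum borel_measurable_power borel_measurable_norm borel_measurable_diff) auto
qed

lemma borel_measurable_potential_round_update:
  fixes X :: "'a \<Rightarrow> 'v::euclidean_space \<times> (nat \<Rightarrow> 'v)" and H :: "'a \<Rightarrow> nat \<Rightarrow> 'v"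
  assumes X1: "(\<lambda>\<omega>. fst (X \<omega>)) \<in> borel_measurable N"
    and X2: "\<And>i. i < n \<Longrightarrow> (\<lambda>\<omega>. snd (X \<omega>) i) \<in> borel_measurable N"
    and H: "\<And>i. i < n \<Longrightarrow> (\<lambda>\<omega>. H \<omega> i) \<in> borel_measurable N"
    and A: "A \<subseteq> {..<n}"
  shows "(\<lambda>\<omega>. potential n (round_update s eta A (X \<omega>) (H \<omega>))) \<in> borel_measurable N"
proof (rule borel_measurable_potential)
  have "(\<lambda>\<omega>. (1 / (real s + 1)) *\<^sub>R (fst (X \<omega>) + (\<Sum>i\<in>A. snd (X \<omega>) i - eta *\<^sub>R H \<omega> i)))
      \<in> borel_measurable N"
    using X1 X2 H A by (intro borel_measurable_scaleR borel_measurable_add borel_measurable_sum borel_measurable_diff) auto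
  then show server: "(\<lambda>\<omega>. fst (round_update s eta A (X \<omega>) (H \<omega>))) \<in> borel_measurable N"
    by (simp add: round_update_def Let_def)
  show "(\<lambda>\<omega>. snd (round_update s eta A (X \<omega>) (H \<omega>)) i) \<in> borel_measurable N" if "i < n" for i
    using server X2[OF that] by (cases "i \<in> A") (simp_all add: round_update_def Let_def)
qed

section \<open>Independence\<close>

lemma Int_stable_sigma_sets:
  assumes "A \<subseteq> Pow \<Omega>"
  shows "Int_stable (sigma_sets \<Omega> A)"
proof -
  interpret sigma_algebra \<Omega> "sigma_sets \<Omega> A"
    using assms by (rule sigma_algebra_sigma_sets)
  show ?thesis by (rule Int_stable)
qed

lemma (in prob_space) indep_set_mono:
  "indep_set A B \<Longrightarrow> A' \<subseteq> A \<Longrightarrow> B' \<subseteq> B \<Longrightarrow> indep_set A' B'"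
  unfolding indep_sets2_eq by blast

lemma Int_stable_Int_products:
  assumes "Int_stable A" "Int_stable B"
  shows "Int_stable {a \<inter> b | a b. a \<in> A \<and> b \<in> B}"
proof (rule Int_stableI)
  fix x y assume "x \<in> {a \<inter> b | a b. a \<in> A \<and> b \<in> B}" "y \<in> {a \<inter> b | a b. a \<in> A \<and> b \<in> B}"
  then obtain a1 b1 a2 b2 where "x = a1 \<inter> b1" "y = a2 \<inter> b2" "a1 \<in> A" "a2 \<in> A" "b1 \<in> B" "b2 \<in> B"
    by auto
  moreover have "x \<inter> y = (a1 \<inter> a2) \<inter> (b1 \<inter> b2)" using calculation by auto
  ultimately show "x \<inter> y \<in> {a \<inter> b | a b. a \<in> A \<and> b \<in> B}"
    using assms by (blast dest: Int_stableD)
qed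

lemma sigma_sets_Un_subset_Int_products:
  assumes "A \<subseteq> Pow \<Omega>" "B \<subseteq> Pow \<Omega>"
  shows "sigma_sets \<Omega> (A \<union> B) \<subseteq> sigma_sets \<Omega> {a \<inter> b | a b. a \<in> sigma_sets \<Omega> A \<and> b \<in> sigma_sets \<Omega> B}"
proof (rule sigma_sets_mono, safe)
  fix a assume "a \<in> A"
  then have "a \<inter> \<Omega> \<in> {a \<inter> b | a b. a \<in> sigma_sets \<Omega> A \<and> b \<in> sigma_sets \<Omega> B}"
    by (blast intro: sigma_sets_top)
  then have "a \<inter> \<Omega> \<in> sigma_sets \<Omega> {a \<inter> b | a b. a \<in> sigma_sets \<Omega> A \<and> b \<in> sigma_sets \<Omega> B}"
    by (rule sigma_sets.Basic)
  moreover have "a \<inter> \<Omega> = a" using assms(1) \<open>a \<in> A\<close> by auto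
  ultimately show "a \<in> sigma_sets \<Omega> {a \<inter> b | a b. a \<in> sigma_sets \<Omega> A \<and> b \<in> sigma_sets \<Omega> B}"
    by simp
next
  fix b assume "b \<in> B"
  then have "\<Omega> \<inter> b \<in> {a \<inter> b | a b. a \<in> sigma_sets \<Omega> A \<and> b \<in> sigma_sets \<Omega> B}"
    by (blast intro: sigma_sets_top)
  then have "\<Omega> \<inter> b \<in> sigma_sets \<Omega> {a \<inter> b | a b. a \<in> sigma_sets \<Omega> A \<and> b \<in> sigma_sets \<Omega> B}"
    by (rule sigma_sets.Basic)
  moreover have "\<Omega> \<inter> b = b" using assms(2) \<open>b \<in> B\<close> by auto
  ultimately show "b \<in> sigma_sets \<Omega> {a \<inter> b | a b. a \<in> sigma_sets \<Omega> A \<and> b \<in> sigma_sets \<Omega> B}"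
    by simp
qed

lemma (in prob_space) indep_set_sigma_sets_Un:
  assumes GS: "GS \<subseteq> Pow (space M)" and GE: "GE \<subseteq> Pow (space M)" and GR: "GR \<subseteq> Pow (space M)"
    and SE_R: "indep_set (sigma_sets (space M) (GS \<union> GE)) (sigma_sets (space M) GR)"
    and S_E: "indep_set (sigma_sets (space M) GS) (sigma_sets (space M) GE)"
  shows "indep_set (sigma_sets (space M) GS) (sigma_sets (space M) (GE \<union> GR))"
proof -
  let ?\<sigma> = "sigma_sets (space M)"
  let ?P = "{b \<inter> c | b c. b \<in> ?\<sigma> GE \<and> c \<in> ?\<sigma> GR}"
  have S_SE: "?\<sigma> GS \<subseteq> ?\<sigma> (GS \<union> GE)" and E_SE: "?\<sigma> GE \<subseteq> ?\<sigma> (GS \<union> GE)"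
    by (simp_all add: sigma_sets_subseteq)
  have "indep_set (?\<sigma> GS) ?P"
  proof (rule indep_setI)
    show "?\<sigma> GS \<subseteq> events" using indep_setD_ev1[OF S_E] .
    show "?P \<subseteq> events" using indep_setD_ev2[OF SE_R] indep_setD_ev1[OF SE_R] E_SE by blast
    fix a x assume a: "a \<in> ?\<sigma> GS" and "x \<in> ?P"
    then obtain b c where x: "x = b \<inter> c" and b: "b \<in> ?\<sigma> GE" and c: "c \<in> ?\<sigma> GR"
      by auto
    have "GS \<union> GE \<subseteq> Pow (space M)" using GS GE by auto
    moreover have "a \<in> ?\<sigma> (GS \<union> GE)" "b \<in> ?\<sigma> (GS \<union> GE)" using a b S_SE E_SE by auto
    ultimately have "a \<inter> b \<in> ?\<sigma> (GS \<union> GE)"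
      by (intro Int_stableD[OF Int_stable_sigma_sets])
    then have "prob (a \<inter> x) = prob (a \<inter> b) * prob c"
      unfolding x using indep_setD[OF SE_R _ c] by (simp add: Int_assoc[symmetric])
    also have "\<dots> = prob a * (prob b * prob c)"
      using indep_setD[OF S_E a b] by simp
    also have "prob b * prob c = prob x"
      unfolding x using indep_setD[OF SE_R _ c, of b] b E_SE by auto
    finally show "prob (a \<inter> x) = prob a * prob x" .
  qed
  then have "indep_set (?\<sigma> (?\<sigma> GS)) (?\<sigma> ?P)"
    using Int_stable_sigma_sets[OF GS] Int_stable_Int_products[OF Int_stable_sigma_sets[OF GE] Int_stable_sigma_sets[OF GR]]
    by (intro indep_set_sigma_sets)
  then show ?thesis
    using sigma_sets_sigma_sets_eq[OF GS] sigma_sets_Un_subset_Int_products[OF GE GR]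
    by (auto elim: indep_set_mono)
qed

lemma sigma_sets_vimage_subset:
  assumes "G \<subseteq> Pow \<Omega>" "X \<in> borel_measurable (sigma \<Omega> G)"
  shows "sigma_sets \<Omega> {X -` A \<inter> \<Omega> | A. A \<in> sets borel} \<subseteq> sigma_sets \<Omega> G"
proof (rule sigma_sets_mono, safe)
  fix A :: "'b set" assume "A \<in> sets borel"
  then show "X -` A \<inter> \<Omega> \<in> sigma_sets \<Omega> G"
    using measurable_sets[OF assms(2)] assms(1) by (simp add: space_measure_of_conv)
qed

lemma subalgebra_sigma: "G \<subseteq> sets M \<Longrightarrow> subalgebra M (sigma (space M) G)"
  unfolding subalgebra_def using sets.space_closed[of M] sets.sigma_sets_subset[of G M]
  by (auto simp: space_measure_of_conv)

lemma (in prob_space) integral_mult_indep_set: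
  fixes X Y :: "'a \<Rightarrow> real"
  assumes G1: "G1 \<subseteq> sets M" and G2: "G2 \<subseteq> sets M"
    and indep: "indep_set (sigma_sets (space M) G1) (sigma_sets (space M) G2)"
    and X: "X \<in> borel_measurable (sigma (space M) G1)" and Y: "Y \<in> borel_measurable (sigma (space M) G2)"
    and "integrable M X" "integrable M Y"
  shows "(\<integral>\<omega>. X \<omega> * Y \<omega> \<partial>M) = (\<integral>\<omega>. X \<omega> \<partial>M) * (\<integral>\<omega>. Y \<omega> \<partial>M)"
proof (rule indep_var_lebesgue_integral)
  have "G1 \<subseteq> Pow (space M)" "G2 \<subseteq> Pow (space M)"
    using G1 G2 sets.space_closed[of M] by auto
  then show "indep_var borel X borel Y"
    unfolding indep_var_eq
    using measurable_from_subalg[OF subalgebra_sigma[OF G1] X] measurable_from_subalg[OF subalgebra_sigma[OF G2] Y]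
      indep_set_mono[OF indep sigma_sets_vimage_subset sigma_sets_vimage_subset] X Y
    by auto
qed fact+

section \<open>The FAVANO process\<close>

locale favano = prob_space M for M :: "'a measure" +
  fixes n s K :: nat and eta :: real and stoch :: bool
    and f :: "nat \<Rightarrow> 'v::euclidean_space \<Rightarrow> real" and grad :: "nat \<Rightarrow> 'v \<Rightarrow> 'v"
    and w0 :: 'v
    and S :: "nat \<Rightarrow> 'a \<Rightarrow> nat set"
    and E :: "nat \<Rightarrow> nat \<Rightarrow> 'a \<Rightarrow> nat"
    and xi :: "nat \<Rightarrow> nat \<Rightarrow> nat \<Rightarrow> 'a \<Rightarrow> 'v"
  assumes s: "1 \<le> s" "s \<le> n"
    and grad: "\<And>i x. i < n \<Longrightarrow> (f i has_derivative (\<lambda>h. grad i x \<bullet> h)) (at x)"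
    and S_meas: "\<And>t. 1 \<le> t \<Longrightarrow> S t \<in> M \<rightarrow>\<^sub>M count_space UNIV"
    and E_meas: "\<And>t i. 1 \<le> t \<Longrightarrow> i < n \<Longrightarrow> E t i \<in> M \<rightarrow>\<^sub>M count_space UNIV"
    and xi_meas: "\<And>t i q. 1 \<le> t \<Longrightarrow> i < n \<Longrightarrow> 1 \<le> q \<Longrightarrow> xi t i q \<in> borel_measurable M"
    and S_unif: "\<And>t A. 1 \<le> t \<Longrightarrow> A \<subseteq> {..<n} \<Longrightarrow> card A = s \<Longrightarrow>
          measure M {\<omega>\<in>space M. S t \<omega> = A} = 1 / real (n choose s)"
    and indep_SE_rest: "\<And>t. 1 \<le> t \<Longrightarrow> indep_set
          (sigma_sets (space M) (ev_S M S {t} \<union> ev_E M E {t} {..<n}))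
          (sigma_sets (space M) (past_ev M n S E xi (t - 1) \<union> ev_xi M xi {t} {..<n} {1..}))"
    and indep_S_E: "\<And>t. 1 \<le> t \<Longrightarrow> indep_set
          (sigma_sets (space M) (ev_S M S {t}))
          (sigma_sets (space M) (ev_E M E {t} {..<n}))"
    and int_Phi: "\<And>t. integrable M (fav_Phi n s K eta grad w0 S E xi (fav_alpha M stoch K E) t)"
    and int_h: "\<And>t i. 1 \<le> t \<Longrightarrow> i < n \<Longrightarrow> integrable M
          (\<lambda>\<omega>. (norm (fav_hchk s K eta grad w0 S E xi (fav_alpha M stoch K E) t i \<omega>))\<^sup>2)"
begin

abbreviation "alpha \<equiv> fav_alpha M stoch K E"
abbreviation "Phi \<equiv> fav_Phi n s K eta grad w0 S E xi alpha"
abbreviation "hchk \<equiv> fav_hchk s K eta grad w0 S E xi alpha"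

text \<open>\<open>S t\<close> is an \<open>s\<close>-subset of the clients only almost surely; \<open>S_good\<close> agrees with it there and
  is a measurable map into the finite family \<open>client_sets n s\<close>, so sums over the selected
  clients stay measurable.\<close>
definition S_good :: "nat \<Rightarrow> 'a \<Rightarrow> nat set" where
  "S_good \<tau> \<omega> = (if S \<tau> \<omega> \<in> client_sets n s then S \<tau> \<omega> else {..<s})"

definition state :: "nat \<Rightarrow> 'a \<Rightarrow> 'v \<times> (nat \<Rightarrow> 'v)" where
  "state \<tau> \<omega> = fav_state s K eta grad w0 S E xi alpha \<tau> \<omega>"

definition state_good :: "nat \<Rightarrow> 'a \<Rightarrow> 'v \<times> (nat \<Rightarrow> 'v)" where
  "state_good \<tau> \<omega> = fav_state s K eta grad w0 S_good E xi alpha \<tau> \<omega>"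

text \<open>Everything the models entering round \<open>t + 1\<close> and the local increments of that round
  depend on; the client set \<open>S (t + 1)\<close> is independent of it.\<close>
definition pre_round_events :: "nat \<Rightarrow> 'a set set" where
  "pre_round_events t = past_ev M n S E xi t \<union> ev_E M E {Suc t} {..<n} \<union> ev_xi M xi {Suc t} {..<n} {1..}"

definition pre_round :: "nat \<Rightarrow> 'a measure" where
  "pre_round t = sigma (space M) (pre_round_events t)"

definition increment :: "nat \<Rightarrow> 'a \<Rightarrow> nat \<Rightarrow> 'v" where
  "increment t \<omega> i = hchk_from grad xi E alpha K eta (Suc t) (snd (state_good t \<omega>)) \<omega> i"

definition updated_potential :: "nat \<Rightarrow> nat set \<Rightarrow> 'a \<Rightarrow> real" where
  "updated_potential t A \<omega> = potential n (round_update s eta A (state_good t \<omega>) (increment t \<omega>))"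

lemma pre_round_events_sets: "pre_round_events t \<subseteq> sets M"
proof -
  have "ev_S M S {1..t} \<subseteq> sets M"
    unfolding ev_S_def using S_meas by (auto intro!: measurable_sets)
  moreover have "ev_E M E T {..<n} \<subseteq> sets M" if "\<forall>\<tau>\<in>T. 1 \<le> \<tau>" for T
    unfolding ev_E_def using E_meas that by (auto intro!: measurable_sets)
  moreover have "ev_xi M xi T {..<n} {1..} \<subseteq> sets M" if "\<forall>\<tau>\<in>T. 1 \<le> \<tau>" for T
    unfolding ev_xi_def using xi_meas that by (auto intro!: measurable_sets)
  ultimately show ?thesis unfolding pre_round_events_def past_ev_def by auto
qed

lemma pre_round_events_Pow: "pre_round_events t \<subseteq> Pow (space M)"
  using pre_round_events_sets sets.space_closed by blast

lemma space_pre_round[simp]: "space (pre_round t) = space M"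
  unfolding pre_round_def using pre_round_events_Pow by (simp add: space_measure_of_conv)

lemma sets_pre_round: "sets (pre_round t) = sigma_sets (space M) (pre_round_events t)"
  unfolding pre_round_def using pre_round_events_Pow by simp

lemma pre_round_events_in_sets: "A \<in> pre_round_events t \<Longrightarrow> A \<in> sets (pre_round t)"
  unfolding sets_pre_round by auto

lemma measurable_pre_round_M: "g \<in> borel_measurable (pre_round t) \<Longrightarrow> g \<in> borel_measurable M"
  unfolding pre_round_def by (rule measurable_from_subalg[OF subalgebra_sigma[OF pre_round_events_sets]])

lemma E_pre_round: "\<tau> \<in> {1..Suc t} \<Longrightarrow> i < n \<Longrightarrow> E \<tau> i \<in> pre_round t \<rightarrow>\<^sub>M count_space UNIV"
proof (rule measurableI)
  fix B :: "nat set" assume "\<tau> \<in> {1..Suc t}" "i < n"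
  then have "E \<tau> i -` B \<inter> space M \<in> pre_round_events t"
    unfolding pre_round_events_def past_ev_def ev_E_def
    by (cases "\<tau> = Suc t") (auto 4 4)
  then show "E \<tau> i -` B \<inter> space (pre_round t) \<in> sets (pre_round t)"
    by (simp add: pre_round_events_in_sets)
qed simp

lemma xi_pre_round: "\<tau> \<in> {1..Suc t} \<Longrightarrow> i < n \<Longrightarrow> 1 \<le> q \<Longrightarrow> xi \<tau> i q \<in> borel_measurable (pre_round t)"
proof (rule measurableI)
  fix B :: "'v set" assume "\<tau> \<in> {1..Suc t}" "i < n" "1 \<le> q" "B \<in> sets borel"
  then have "\<tau> \<in> {1..t} \<or> \<tau> \<in> {Suc t}" by auto
  then have "xi \<tau> i q -` B \<inter> space M \<in> ev_xi M xi {1..t} {..<n} {1..} \<union> ev_xi M xi {Suc t} {..<n} {1..}"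
    unfolding ev_xi_def using \<open>i < n\<close> \<open>1 \<le> q\<close> \<open>B \<in> sets borel\<close> by blast
  then have "xi \<tau> i q -` B \<inter> space M \<in> pre_round_events t"
    unfolding pre_round_events_def past_ev_def by blast
  then show "xi \<tau> i q -` B \<inter> space (pre_round t) \<in> sets (pre_round t)"
    by (simp add: pre_round_events_in_sets)
qed simp

lemma alpha_pre_round: "\<tau> \<in> {1..Suc t} \<Longrightarrow> i < n \<Longrightarrow> alpha \<tau> i \<in> borel_measurable (pre_round t)"
  using measurable_compose[OF E_pre_round, of \<tau> t i "\<lambda>k. real (min k K)" borel]
  unfolding fav_alpha_def[abs_def] by (cases stoch) auto

lemma S_good_client_sets: "S_good \<tau> \<omega> \<in> client_sets n s"
  unfolding S_good_def client_sets_def using s by auto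

lemma S_good_pre_round:
  assumes "\<tau> \<in> {1..t}"
  shows "{\<omega> \<in> space (pre_round t). S_good \<tau> \<omega> = A} \<in> sets (pre_round t)"
proof -
  have "{\<omega> \<in> space (pre_round t). S_good \<tau> \<omega> = A}
      = S \<tau> -` ({A} \<inter> client_sets n s \<union> (if A = {..<s} then - client_sets n s else {})) \<inter> space M"
    by (auto simp: S_good_def split: if_splits)
  also have "\<dots> \<in> pre_round_events t"
    using assms unfolding pre_round_events_def past_ev_def ev_S_def by blast
  finally show ?thesis by (rule pre_round_events_in_sets)
qed

lemma increment_pre_round_if_state:
  assumes "\<tau> \<le> t" "i < n" "\<And>j. (\<lambda>\<omega>. snd (state_good \<tau> \<omega>) j) \<in> borel_measurable (pre_round t)"
  shows "(\<lambda>\<omega>. increment \<tau> \<omega> i) \<in> borel_measurable (pre_round t)"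
proof -
  have round: "Suc \<tau> \<in> {1..Suc t}" using assms(1) by simp
  show ?thesis
    unfolding increment_def
    by (rule borel_measurable_hchk_from[where grad = grad and i = i and xi = xi and t = "Suc \<tau>" and E = E
          and alpha = alpha and N = "pre_round t" and ws = "\<lambda>\<omega>. snd (state_good \<tau> \<omega>)",
          OF borel_measurable_gradient[OF grad[OF assms(2)]] xi_pre_round[OF round assms(2)] assms(3)
          E_pre_round[OF round assms(2)] alpha_pre_round[OF round assms(2)]])
qed

lemma state_good_pre_round:
  "\<tau> \<le> t \<Longrightarrow> (\<lambda>\<omega>. fst (state_good \<tau> \<omega>)) \<in> borel_measurable (pre_round t)
    \<and> (\<forall>i. (\<lambda>\<omega>. snd (state_good \<tau> \<omega>) i) \<in> borel_measurable (pre_round t))"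
proof (induction \<tau>)
  case 0
  then show ?case by (simp add: state_good_def)
next
  case (Suc \<tau>)
  then have server: "(\<lambda>\<omega>. fst (state_good \<tau> \<omega>)) \<in> borel_measurable (pre_round t)"
    and clients: "\<And>i. (\<lambda>\<omega>. snd (state_good \<tau> \<omega>) i) \<in> borel_measurable (pre_round t)" by auto
  have round: "Suc \<tau> \<in> {1..t}" using Suc by auto
  define w' where "w' \<omega> = (1 / (real s + 1)) *\<^sub>R (fst (state_good \<tau> \<omega>)
      + (\<Sum>i\<in>S_good (Suc \<tau>) \<omega>. snd (state_good \<tau> \<omega>) i - eta *\<^sub>R increment \<tau> \<omega> i))" for \<omega>
  have step: "state_good (Suc \<tau>) \<omega> = (w' \<omega>, \<lambda>i. if i \<in> S_good (Suc \<tau>) \<omega> then w' \<omega> else snd (state_good \<tau> \<omega>) i)" for \<omega>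
    unfolding state_good_def w'_def increment_def by (simp add: Let_def)
  have "(\<lambda>\<omega>. \<Sum>i\<in>S_good (Suc \<tau>) \<omega>. snd (state_good \<tau> \<omega>) i - eta *\<^sub>R increment \<tau> \<omega> i) \<in> borel_measurable (pre_round t)"
    using finite_client_sets S_good_client_sets S_good_pre_round[OF round] clients
      increment_pre_round_if_state[of \<tau> t] Suc.prems
    by (intro borel_measurable_sum_random_set[where \<F> = "client_sets n s"]) (auto simp: client_sets_def)
  then have "w' \<in> borel_measurable (pre_round t)"
    unfolding w'_def[abs_def] using server by measurable
  moreover have "{\<omega> \<in> space (pre_round t). i \<in> S_good (Suc \<tau>) \<omega>} \<in> sets (pre_round t)" for i
    using finite_client_sets S_good_client_sets S_good_pre_round[OF round]
    by (intro sets_mem_random_set[where \<F> = "client_sets n s"]) auto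
  ultimately show ?case
    unfolding step using clients by (auto intro!: measurable_If)
qed

lemma increment_pre_round: "i < n \<Longrightarrow> (\<lambda>\<omega>. increment t \<omega> i) \<in> borel_measurable (pre_round t)"
  using state_good_pre_round[of t t] by (intro increment_pre_round_if_state) auto

lemma updated_potential_pre_round: "A \<in> client_sets n s \<Longrightarrow> updated_potential t A \<in> borel_measurable (pre_round t)"
  unfolding updated_potential_def[abs_def]
  using state_good_pre_round[of t t] increment_pre_round
  by (intro borel_measurable_potential_round_update) (auto simp: client_sets_def)

lemma potential_state_good_measurable: "(\<lambda>\<omega>. potential n (state_good t \<omega>)) \<in> borel_measurable M"
  using state_good_pre_round[of t t]
  by (intro measurable_pre_round_M borel_measurable_potential) auto

lemma increment_sq_measurable: "i < n \<Longrightarrow> (\<lambda>\<omega>. (norm (increment t \<omega> i))\<^sup>2) \<in> borel_measurable M"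
  using increment_pre_round[of i t]
  by (auto intro!: measurable_pre_round_M[of _ t] borel_measurable_power borel_measurable_norm)

lemma S_event: "1 \<le> \<tau> \<Longrightarrow> {\<omega> \<in> space M. S \<tau> \<omega> = A} \<in> events"
  using measurable_sets[OF S_meas, of \<tau> "{A}"] by (simp add: vimage_def Int_def conj_commute)

lemma prob_S_eq: "1 \<le> \<tau> \<Longrightarrow> A \<in> client_sets n s \<Longrightarrow> prob {\<omega> \<in> space M. S \<tau> \<omega> = A} = 1 / real (n choose s)"
  using S_unif unfolding client_sets_def by auto

lemma AE_S_client_sets: "AE \<omega> in M. \<forall>\<tau>\<in>{1..t}. S \<tau> \<omega> \<in> client_sets n s"
proof (rule AE_finite_allI)
  fix \<tau> assume "\<tau> \<in> {1..t}"
  then have \<tau>: "1 \<le> \<tau>" by simp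
  have "{\<omega> \<in> space M. S \<tau> \<omega> \<in> client_sets n s} = (\<Union>A\<in>client_sets n s. {\<omega> \<in> space M. S \<tau> \<omega> = A})"
    by auto
  also have "prob \<dots> = (\<Sum>A\<in>client_sets n s. prob {\<omega> \<in> space M. S \<tau> \<omega> = A})"
    using finite_client_sets S_event[OF \<tau>] by (intro measure_finite_Union) (auto simp: disjoint_family_on_def)
  also have "\<dots> = 1"
    using prob_S_eq[OF \<tau>] card_client_sets[of n s] s by simp
  finally show "AE \<omega> in M. S \<tau> \<omega> \<in> client_sets n s"
    by (auto dest: AE_prob_1)
qed simp

lemma state_eq_state_good: "\<forall>\<tau>'\<in>{1..\<tau>}. S \<tau>' \<omega> \<in> client_sets n s \<Longrightarrow> state \<tau> \<omega> = state_good \<tau> \<omega>"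
proof (induction \<tau>)
  case 0
  then show ?case by (simp add: state_def state_good_def)
next
  case (Suc \<tau>)
  have "state \<tau> \<omega> = state_good \<tau> \<omega>"
    using Suc.prems by (intro Suc.IH) simp
  moreover have "S_good (Suc \<tau>) \<omega> = S (Suc \<tau>) \<omega>"
    using Suc.prems by (simp add: S_good_def)
  ultimately show ?case unfolding state_def state_good_def by (simp only: fav_state.simps(2))
qed

lemma Phi_eq_potential: "Phi \<tau> \<omega> = potential n (state \<tau> \<omega>)"
  unfolding fav_Phi_def fav_mu_def potential_def centroid_def state_def Let_def by simp

lemma state_Suc:
  "state (Suc t) \<omega> = round_update s eta (S (Suc t) \<omega>) (state t \<omega>)
      (\<lambda>i. hchk_from grad xi E alpha K eta (Suc t) (snd (state t \<omega>)) \<omega> i)"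
  unfolding state_def round_update_def by (simp only: fav_state.simps(2) Let_def)

lemma state_quantities_eq:
  assumes "\<forall>\<tau>\<in>{1..Suc t}. S \<tau> \<omega> \<in> client_sets n s" "\<omega> \<in> space M"
  shows "Phi t \<omega> = potential n (state_good t \<omega>)"
    and "hchk (Suc t) i \<omega> = increment t \<omega> i"
    and "Phi (Suc t) \<omega> = (\<Sum>A\<in>client_sets n s. indicator {\<omega> \<in> space M. S (Suc t) \<omega> = A} \<omega> * updated_potential t A \<omega>)"
proof -
  have state: "state t \<omega> = state_good t \<omega>"
    using assms(1) by (intro state_eq_state_good) auto
  show "Phi t \<omega> = potential n (state_good t \<omega>)"
    unfolding Phi_eq_potential state ..
  show "hchk (Suc t) i \<omega> = increment t \<omega> i"
    unfolding fav_hchk_def increment_def using state by (simp add: state_def)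
  have "Phi (Suc t) \<omega> = updated_potential t (S (Suc t) \<omega>) \<omega>"
    unfolding Phi_eq_potential state_Suc updated_potential_def state increment_def ..
  also have "\<dots> = (\<Sum>A\<in>client_sets n s. if A = S (Suc t) \<omega> then updated_potential t A \<omega> else 0)"
    using assms(1) finite_client_sets by (simp add: sum.delta')
  also have "\<dots> = (\<Sum>A\<in>client_sets n s. indicator {\<omega> \<in> space M. S (Suc t) \<omega> = A} \<omega> * updated_potential t A \<omega>)"
    using assms(2) by (intro sum.cong) (auto simp: indicator_def)
  finally show "Phi (Suc t) \<omega> = \<dots>" .
qed

lemma AE_state_quantities_eq:
  shows "AE \<omega> in M. Phi t \<omega> = potential n (state_good t \<omega>)"
    and "AE \<omega> in M. hchk (Suc t) i \<omega> = increment t \<omega> i"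
    and "AE \<omega> in M. Phi (Suc t) \<omega>
      = (\<Sum>A\<in>client_sets n s. indicator {\<omega> \<in> space M. S (Suc t) \<omega> = A} \<omega> * updated_potential t A \<omega>)"
  using AE_S_client_sets[of "Suc t"] AE_space by (eventually_elim, simp_all add: state_quantities_eq)+

lemma integrable_potential_state_good: "integrable M (\<lambda>\<omega>. potential n (state_good t \<omega>))"
  using int_Phi[of t] potential_state_good_measurable AE_state_quantities_eq(1)
  by (rule integrable_cong_AE_imp)

lemma integrable_increment_sq: "i < n \<Longrightarrow> integrable M (\<lambda>\<omega>. (norm (increment t \<omega> i))\<^sup>2)"
  using int_h[of "Suc t" i] increment_sq_measurable AE_state_quantities_eq(2)[of t i]
  by (auto elim!: integrable_cong_AE_imp eventually_mono)

lemma integrable_updated_potential: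
  assumes A: "A \<in> client_sets n s"
  shows "integrable M (updated_potential t A)"
proof (rule Bochner_Integration.integrable_bound)
  show "integrable M (\<lambda>\<omega>. 2 * potential n (state_good t \<omega>) + 3 * real s * eta\<^sup>2 * (\<Sum>i<n. (norm (increment t \<omega> i))\<^sup>2))"
    using integrable_potential_state_good integrable_increment_sq
    by (intro Bochner_Integration.integrable_add Bochner_Integration.integrable_mult_right
        Bochner_Integration.integrable_sum) auto
  show "updated_potential t A \<in> borel_measurable M"
    using updated_potential_pre_round[OF A] by (rule measurable_pre_round_M)
  show "AE \<omega> in M. norm (updated_potential t A \<omega>)
      \<le> norm (2 * potential n (state_good t \<omega>) + 3 * real s * eta\<^sup>2 * (\<Sum>i<n. (norm (increment t \<omega> i))\<^sup>2))"
  proof (rule AE_I2)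
    fix \<omega>
    obtain w z where "state_good t \<omega> = (w, z)" by fastforce
    then have "updated_potential t A \<omega>
        \<le> 2 * potential n (state_good t \<omega>) + 3 * real s * eta\<^sup>2 * (\<Sum>i<n. (norm (increment t \<omega> i))\<^sup>2)"
      using A s(1) unfolding updated_potential_def client_sets_def
      by (auto intro: potential_round_update_le_double)
    then show "norm (updated_potential t A \<omega>) \<le> norm (2 * potential n (state_good t \<omega>)
        + 3 * real s * eta\<^sup>2 * (\<Sum>i<n. (norm (increment t \<omega> i))\<^sup>2))"
      using potential_nonneg[of n "round_update s eta A (state_good t \<omega>) (increment t \<omega>)"]
      unfolding updated_potential_def real_norm_def by linarith
  qed
qed

lemma indep_S_pre_round:
  "indep_set (sigma_sets (space M) (ev_S M S {Suc t})) (sigma_sets (space M) (pre_round_events t))"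
proof -
  have split: "pre_round_events t = ev_E M E {Suc t} {..<n} \<union> (past_ev M n S E xi t \<union> ev_xi M xi {Suc t} {..<n} {1..})"
    unfolding pre_round_events_def by auto
  have Pow: "ev_S M S {Suc t} \<subseteq> Pow (space M)" "ev_E M E {Suc t} {..<n} \<subseteq> Pow (space M)"
    "past_ev M n S E xi t \<union> ev_xi M xi {Suc t} {..<n} {1..} \<subseteq> Pow (space M)"
    using pre_round_events_Pow[of t] unfolding pre_round_events_def by (auto simp: ev_S_def ev_E_def)
  show ?thesis
    unfolding split using indep_SE_rest[of "Suc t"] indep_S_E[of "Suc t"]
    by (intro indep_set_sigma_sets_Un[OF Pow]) simp_all
qed

lemma integral_selected_updated_potential:
  fixes t :: nat
  assumes A: "A \<in> client_sets n s"
  defines "B \<equiv> {\<omega> \<in> space M. S (Suc t) \<omega> = A}"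
  shows "(\<integral>\<omega>. indicator B \<omega> * updated_potential t A \<omega> \<partial>M) = prob B * (\<integral>\<omega>. updated_potential t A \<omega> \<partial>M)"
proof -
  have ev_S_sets: "ev_S M S {Suc t} \<subseteq> sets M"
    unfolding ev_S_def using S_meas by (auto intro!: measurable_sets)
  have B_ev_S: "B \<in> ev_S M S {Suc t}"
  proof -
    have "B = S (Suc t) -` {A} \<inter> space M" unfolding B_def by auto
    then show ?thesis unfolding ev_S_def by blast
  qed
  then have B: "B \<in> events" using ev_S_sets by auto
  have "ev_S M S {Suc t} \<subseteq> Pow (space M)"
    using ev_S_sets sets.space_closed by blast
  then have "indicator B \<in> borel_measurable (sigma (space M) (ev_S M S {Suc t}))"
    using B_ev_S by (intro borel_measurable_indicator) simp
  moreover have "updated_potential t A \<in> borel_measurable (sigma (space M) (pre_round_events t))"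
    using updated_potential_pre_round[OF A] unfolding pre_round_def .
  moreover have "integrable M (indicator B :: 'a \<Rightarrow> real)"
    using B by (simp add: less_top[symmetric])
  ultimately have "(\<integral>\<omega>. indicator B \<omega> * updated_potential t A \<omega> \<partial>M)
      = (\<integral>\<omega>. indicator B \<omega> \<partial>M) * (\<integral>\<omega>. updated_potential t A \<omega> \<partial>M)"
    using integrable_updated_potential[OF A]
    by (intro integral_mult_indep_set[OF ev_S_sets pre_round_events_sets indep_S_pre_round])
  then show ?thesis using B by simp
qed

lemma integral_Phi_Suc:
  "(\<integral>\<omega>. Phi (Suc t) \<omega> \<partial>M) = (\<integral>\<omega>. (1 / real (n choose s)) * (\<Sum>A\<in>client_sets n s. updated_potential t A \<omega>) \<partial>M)"
proof -
  let ?B = "\<lambda>A. {\<omega> \<in> space M. S (Suc t) \<omega> = A}"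
  have selected: "integrable M (\<lambda>\<omega>. indicator (?B A) \<omega> * updated_potential t A \<omega>)" if "A \<in> client_sets n s" for A
    using integrable_real_mult_indicator[OF S_event integrable_updated_potential[OF that], of "Suc t"]
    by (simp add: mult.commute)
  have "(\<integral>\<omega>. Phi (Suc t) \<omega> \<partial>M) = (\<integral>\<omega>. (\<Sum>A\<in>client_sets n s. indicator (?B A) \<omega> * updated_potential t A \<omega>) \<partial>M)"
    using selected
    by (intro integral_cong_AE borel_measurable_integrable[OF int_Phi] AE_state_quantities_eq(3)
        borel_measurable_integrable integrable_sum) auto
  also have "\<dots> = (\<Sum>A\<in>client_sets n s. prob (?B A) * (\<integral>\<omega>. updated_potential t A \<omega> \<partial>M))"
    using selected integral_selected_updated_potential by (simp add: integral_sum)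
  also have "\<dots> = (\<Sum>A\<in>client_sets n s. (1 / real (n choose s)) * (\<integral>\<omega>. updated_potential t A \<omega> \<partial>M))"
    using prob_S_eq[of "Suc t"] by simp
  also have "\<dots> = (\<integral>\<omega>. (1 / real (n choose s)) * (\<Sum>A\<in>client_sets n s. updated_potential t A \<omega>) \<partial>M)"
    using integrable_updated_potential by (simp add: integral_sum sum_distrib_left)
  finally show ?thesis .
qed

lemma integral_potential_state_good: "(\<integral>\<omega>. potential n (state_good t \<omega>) \<partial>M) = (\<integral>\<omega>. Phi t \<omega> \<partial>M)"
  using potential_state_good_measurable borel_measurable_integrable[OF int_Phi] AE_state_quantities_eq(1)[of t]
  by (intro integral_cong_AE) (auto elim: eventually_mono)

lemma integral_increment_sq:
  "i < n \<Longrightarrow> (\<integral>\<omega>. (norm (increment t \<omega> i))\<^sup>2 \<partial>M) = (\<integral>\<omega>. (norm (hchk (Suc t) i \<omega>))\<^sup>2 \<partial>M)"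
  using increment_sq_measurable borel_measurable_integrable[OF int_h[of "Suc t" i]] AE_state_quantities_eq(2)[of t i]
  by (intro integral_cong_AE) (auto elim: eventually_mono)

lemma integral_Phi_Suc_le:
  "(\<integral>\<omega>. Phi (t + 1) \<omega> \<partial>M)
     \<le> (1 - (1 / real n) * (real s * (real n - real s)) / (2 * (real n + 1) * (real s + 1))) * (\<integral>\<omega>. Phi t \<omega> \<partial>M)
       + 3 * (real s)\<^sup>2 / real n * eta\<^sup>2 * (\<Sum>i<n. \<integral>\<omega>. (norm (hchk (t + 1) i \<omega>))\<^sup>2 \<partial>M)"
    (is "_ \<le> ?\<kappa> * _ + ?c * _")
proof -
  have "(\<integral>\<omega>. Phi (Suc t) \<omega> \<partial>M)
      \<le> (\<integral>\<omega>. ?\<kappa> * potential n (state_good t \<omega>) + ?c * (\<Sum>i<n. (norm (increment t \<omega> i))\<^sup>2) \<partial>M)"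
    unfolding integral_Phi_Suc
  proof (rule integral_mono)
    show "integrable M (\<lambda>\<omega>. 1 / real (n choose s) * (\<Sum>A\<in>client_sets n s. updated_potential t A \<omega>))"
      using integrable_updated_potential by auto
    show "integrable M (\<lambda>\<omega>. ?\<kappa> * potential n (state_good t \<omega>) + ?c * (\<Sum>i<n. (norm (increment t \<omega> i))\<^sup>2))"
      using integrable_potential_state_good integrable_increment_sq
      by (intro Bochner_Integration.integrable_add Bochner_Integration.integrable_mult_right
          Bochner_Integration.integrable_sum) auto
    fix \<omega>
    obtain w z where "state_good t \<omega> = (w, z)" by fastforce
    then show "1 / real (n choose s) * (\<Sum>A\<in>client_sets n s. updated_potential t A \<omega>)
        \<le> ?\<kappa> * potential n (state_good t \<omega>) + ?c * (\<Sum>i<n. (norm (increment t \<omega> i))\<^sup>2)"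
      using mean_potential_round_update_le[OF s, of eta w z "increment t \<omega>"]
      unfolding updated_potential_def by simp
  qed
  also have "\<dots> = ?\<kappa> * (\<integral>\<omega>. Phi t \<omega> \<partial>M) + ?c * (\<Sum>i<n. \<integral>\<omega>. (norm (hchk (Suc t) i \<omega>))\<^sup>2 \<partial>M)"
  proof -
    have "integrable M (\<lambda>\<omega>. ?\<kappa> * potential n (state_good t \<omega>))"
      using integrable_potential_state_good by auto
    moreover have "integrable M (\<lambda>\<omega>. ?c * (\<Sum>i<n. (norm (increment t \<omega> i))\<^sup>2))"
      by (intro Bochner_Integration.integrable_mult_right Bochner_Integration.integrable_sum integrable_increment_sq) simp
    ultimately show ?thesis
      using integrable_increment_sq
      by (simp add: integral_potential_state_good integral_increment_sq integral_sum)
  qed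
  finally show ?thesis by simp
qed

end

theorem mainTheorem4:
  fixes M :: "'a measure"
    and n s K :: nat and eta :: real and stoch :: bool
    and f :: "nat \<Rightarrow> 'v::euclidean_space \<Rightarrow> real" and grad :: "nat \<Rightarrow> 'v \<Rightarrow> 'v"
    and w0 :: 'v
    and S :: "nat \<Rightarrow> 'a \<Rightarrow> nat set"
    and E :: "nat \<Rightarrow> nat \<Rightarrow> 'a \<Rightarrow> nat"
    and xi :: "nat \<Rightarrow> nat \<Rightarrow> nat \<Rightarrow> 'a \<Rightarrow> 'v"
    and t :: nat
  assumes P: "prob_space M"
    and n: "1 \<le> n" and s: "1 \<le> s" "s \<le> n" and K: "1 \<le> K" and eta: "0 < eta"
    and grad: "\<And>i x. i < n \<Longrightarrow> (f i has_derivative (\<lambda>h. grad i x \<bullet> h)) (at x)"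
    and S_meas: "\<And>t. 1 \<le> t \<Longrightarrow> S t \<in> M \<rightarrow>\<^sub>M count_space UNIV"
    and E_meas: "\<And>t i. 1 \<le> t \<Longrightarrow> i < n \<Longrightarrow> E t i \<in> M \<rightarrow>\<^sub>M count_space UNIV"
    and xi_meas: "\<And>t i q. 1 \<le> t \<Longrightarrow> i < n \<Longrightarrow> 1 \<le> q \<Longrightarrow> xi t i q \<in> borel_measurable M"
    and xi_int: "\<And>t i q b. 1 \<le> t \<Longrightarrow> i < n \<Longrightarrow> 1 \<le> q \<Longrightarrow> b \<in> Basis \<Longrightarrow>
                   integrable M (\<lambda>\<omega>. xi t i q \<omega> \<bullet> b)"
    and xi_mean0: "\<And>t i q b. 1 \<le> t \<Longrightarrow> i < n \<Longrightarrow> 1 \<le> q \<Longrightarrow> b \<in> Basis \<Longrightarrow>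
          AE \<omega> in M. real_cond_exp M
             (sigma (space M) (past_ev M n S E xi (t - 1) \<union> ev_xi M xi {t} {i} {1..<q}))
             (\<lambda>\<omega>. xi t i q \<omega> \<bullet> b) \<omega> = 0"
    and E_pos: "\<And>t i. 1 \<le> t \<Longrightarrow> i < n \<Longrightarrow> 0 < measure M {\<omega>\<in>space M. 0 < E t i \<omega>}"
    and S_unif: "\<And>t A. 1 \<le> t \<Longrightarrow> A \<subseteq> {..<n} \<Longrightarrow> card A = s \<Longrightarrow>
          measure M {\<omega>\<in>space M. S t \<omega> = A} = 1 / real (n choose s)"
    and indep_SE_rest: "\<And>t. 1 \<le> t \<Longrightarrow> prob_space.indep_set M
          (sigma_sets (space M) (ev_S M S {t} \<union> ev_E M E {t} {..<n}))
          (sigma_sets (space M) (past_ev M n S E xi (t - 1) \<union> ev_xi M xi {t} {..<n} {1..}))"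
    and indep_S_E: "\<And>t. 1 \<le> t \<Longrightarrow> prob_space.indep_set M
          (sigma_sets (space M) (ev_S M S {t}))
          (sigma_sets (space M) (ev_E M E {t} {..<n}))"
    and int_Phi: "\<And>t. integrable M
          (fav_Phi n s K eta grad w0 S E xi (fav_alpha M stoch K E) t)"
    and int_h: "\<And>t i. 1 \<le> t \<Longrightarrow> i < n \<Longrightarrow> integrable M
          (\<lambda>\<omega>. (norm (fav_hchk s K eta grad w0 S E xi (fav_alpha M stoch K E) t i \<omega>))\<^sup>2)"
  shows "(\<integral>\<omega>. fav_Phi n s K eta grad w0 S E xi (fav_alpha M stoch K E) (t + 1) \<omega> \<partial>M)
     \<le> (1 - (1 / real n) * (real s * (real n - real s)) / (2 * (real n + 1) * (real s + 1)))
          * (\<integral>\<omega>. fav_Phi n s K eta grad w0 S E xi (fav_alpha M stoch K E) t \<omega> \<partial>M)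
       + 3 * (real s)\<^sup>2 / real n * eta\<^sup>2 *
          (\<Sum>i<n. \<integral>\<omega>. (norm (fav_hchk s K eta grad w0 S E xi (fav_alpha M stoch K E) (t + 1) i \<omega>))\<^sup>2 \<partial>M)"
proof -
  interpret favano M n s K eta stoch f grad w0 S E xi
    by (intro favano.intro favano_axioms.intro)
      (fact P s grad S_meas E_meas xi_meas S_unif indep_SE_rest indep_S_E int_Phi int_h)+
  show ?thesis by (rule integral_Phi_Suc_le)
qed

end
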